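(* Let $t$ be a vertex of $P(G,g_0)$. If the operation $\mu_{h,f}$ (for some $h,f\in G_t$) is applicable to $t$, then $\mu_{h,f}(t)$ is a vertex of $P(G,g_0)$ adjacent to $t$. Likewise, if the operation $\mu_h$ (for some $h\in G_t$) is applicable to $t$, then $\mu_h(t)$ is a vertex of $P(G,g_0)$ adjacent to $t$.
   Context: Let $G$ be a finite abelian group of order $D$ with zero element $0$, and let $G^+=G\setminus\{0\}$. For $g_0\in G$, let $T(G,g_0)$ be the set of vectors $t=(t(g))_{g\in G^+}\in\mathbb{Z}_{\ge 0}^{G^+}$ with $\sum_{g\in G^+}t(g)g=g_0$ (sum computed in $G$), where the zero vector is excluded when $g_0=0$. The master corner polyhedron is $P(G,g_0)=\mathrm{conv}\,T(G,g_0)\subset\mathbb{R}^{G^+}$. For $t\in T(G,g_0)$ put $G_t=\{g\in G^+ : t(g)>0\}$. Two vertices are adjacent if the segment joining them is an edge (one-dimensional face) of $P(G,g_0)$. $\mu$-operations: For $t\in T(G,g_0)$ and distinct $h,f\in G_t$ with $t(h)\le t(f)$ and $h+f\neq 0$, the operation $\mu_{h,f}$ is said to be applicable to $t$, and $s=\mu_{h,f}(t)$ is defined by $s(h)=0$, $s(f)=t(f)-t(h)$, $s(h+f)=t(h+f)+t(h)$, and $s(g)=t(g)$ for all other $g\in G^+$. For $t\in T(G,g_0)$ and $h\in G_t$ with $t(h)>1$ and $t(h)h\neq 0$, the operation $\mu_h$ is applicable to $t$, and $s=\mu_h(t)$ is defined by $s(h)=0$, $s(t(h)h)=t(t(h)h)+1$,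 and $s(g)=t(g)$ for all other $g\in G^+$. *)

theory Defs
  imports "HOL-Analysis.Analysis"
begin

text \<open>Vectors of Z_{>=0}^{G^+} are functions t :: 'g => nat with t 0 = 0;
  they are embedded into (real, 'g) vec (coordinate 0 is always 0), which is an
  affine copy of R^{G^+}; faces and extreme points are intrinsic.\<close>

definition nsmul :: "nat \<Rightarrow> 'g::ab_group_add \<Rightarrow> 'g" where
  "nsmul n g = (\<Sum>i<n. g)"

definition gsum :: "('g::{ab_group_add,finite} \<Rightarrow> nat) \<Rightarrow> 'g" where
  "gsum t = (\<Sum>g\<in>UNIV - {0}. nsmul (t g) g)"

definition Tset :: "'g::{ab_group_add,finite} \<Rightarrow> ('g \<Rightarrow> nat) set" where
  "Tset g0 = {t. t 0 = 0 \<and> gsum t = g0 \<and> (g0 = 0 \<longrightarrow> t \<noteq> (\<lambda>_. 0))}"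

definition emb :: "('g::{ab_group_add,finite} \<Rightarrow> nat) \<Rightarrow> (real, 'g) vec" where
  "emb t = (\<chi> g. real (t g))"

definition corner :: "'g::{ab_group_add,finite} \<Rightarrow> ((real, 'g) vec) set" where
  "corner g0 = convex hull (emb ` Tset g0)"

definition supp :: "('g::{ab_group_add,finite} \<Rightarrow> nat) \<Rightarrow> 'g set" where
  "supp t = {g. g \<noteq> 0 \<and> t g > 0}"

definition is_vertex :: "'g::{ab_group_add,finite} \<Rightarrow> ('g \<Rightarrow> nat) \<Rightarrow> bool" where
  "is_vertex g0 t \<longleftrightarrow> t \<in> Tset g0 \<and> emb t extreme_point_of corner g0"

definition adjacent :: "'g::{ab_group_add,finite} \<Rightarrow> ('g \<Rightarrow> nat) \<Rightarrow> ('g \<Rightarrow> nat) \<Rightarrow> bool" where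
  "adjacent g0 t s \<longleftrightarrow> emb t \<noteq> emb s \<and>
     closed_segment (emb t) (emb s) face_of corner g0"

definition mu2 :: "('g::{ab_group_add,finite} \<Rightarrow> nat) \<Rightarrow> 'g \<Rightarrow> 'g \<Rightarrow> ('g \<Rightarrow> nat)" where
  "mu2 t h f = (let s1 = t(h := 0); s2 = s1(f := s1 f - t h) in s2(h + f := s2 (h + f) + t h))"

definition mu1 :: "('g::{ab_group_add,finite} \<Rightarrow> nat) \<Rightarrow> 'g \<Rightarrow> ('g \<Rightarrow> nat)" where
  "mu1 t h = (let s1 = t(h := 0); k = nsmul (t h) h in s1(k := s1 k + 1))"

definition mu2_applicable :: "('g::{ab_group_add,finite} \<Rightarrow> nat) \<Rightarrow> 'g \<Rightarrow> 'g \<Rightarrow> bool" where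
  "mu2_applicable t h f \<longleftrightarrow> h \<in> supp t \<and> f \<in> supp t \<and> h \<noteq> f \<and> t h \<le> t f \<and> h + f \<noteq> 0"

definition mu1_applicable :: "('g::{ab_group_add,finite} \<Rightarrow> nat) \<Rightarrow> 'g \<Rightarrow> bool" where
  "mu1_applicable t h \<longleftrightarrow> h \<in> supp t \<and> t h > 1 \<and> nsmul (t h) h \<noteq> 0"

end

theory Submission
  imports Defs
begin

(* Every operation mu_{h,f}, mu_h is an instance of a single "merge" move: for an
   element k of G and a multiset w of nonzero elements of G with sum k (not containing k),
   a merge replaces m copies of w in t by m copies of k.  In the embedding this moves
   emb t by -m W, where W = emb w - e_k.  The converse move ("expansion", +c W) maps
   T(G,g0) into itself as long as c <= t(k), and by convexity the whole polyhedron is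
   closed under y |-> y + c W for 0 <= c <= y(k).  An abstract convex-geometry lemma
   then shows: if x0 is an extreme point of a convex set P closed under such pushes along
   W, and the ray x0 - c W leaves P exactly after x0 - m W, then the segment
   [x0, x0 - m W] is a face of P.  For a merge that uses up all copies of some element
   j of w, nonnegativity of coordinate j gives exactly this bound, so the merged point is
   a vertex adjacent to t.  The theorem follows since mu_{h,f} and mu_h are such merges;
   for mu_h one also needs t(h) h <> h, which holds at every vertex. *)

section \<open>Multiples and weighted sums in an abelian group\<close>

lemma nsmul_0 [simp]: "nsmul 0 g = 0"
  by (simp add: nsmul_def)

lemma nsmul_Suc_0 [simp]: "nsmul (Suc 0) g = g"
  by (simp add: nsmul_def)

lemma nsmul_Suc: "nsmul (Suc n) g = nsmul n g + g"
  by (simp add: nsmul_def)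

lemma nsmul_add: "nsmul (m + n) g = nsmul m g + nsmul n g"
  by (induction n) (simp_all add: nsmul_Suc add.assoc)

lemma nsmul_mult: "nsmul (m * n) g = nsmul m (nsmul n g)"
  by (induction m) (simp_all add: nsmul_Suc nsmul_add add.commute)

lemma nsmul_sum: "nsmul c (\<Sum>x\<in>A. f x) = (\<Sum>x\<in>A. nsmul c (f x))"
  by (induction c) (simp_all add: nsmul_Suc sum.distrib)

lemma gsum_add: "gsum (\<lambda>g. p g + q g) = gsum p + gsum q"
  by (simp add: gsum_def nsmul_add sum.distrib)

lemma gsum_cmul: "gsum (\<lambda>g. c * q g) = nsmul c (gsum q)"
  by (simp add: gsum_def nsmul_mult nsmul_sum)

lemma gsum_single:
  fixes h :: "'g::{ab_group_add,finite}"
  assumes "h \<noteq> 0"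
  shows "gsum (\<lambda>g. if g = h then n else 0) = nsmul n h"
proof -
  have "gsum (\<lambda>g. if g = h then n else 0) = (\<Sum>g\<in>UNIV - {0}. if g = h then nsmul n h else 0)"
    unfolding gsum_def by (rule sum.cong) auto
  also have "\<dots> = nsmul n h"
    using assms by (simp add: sum.delta)
  finally show ?thesis .
qed

lemma gsum_upd:
  fixes h :: "'g::{ab_group_add,finite}"
  assumes "h \<noteq> 0"
  shows "gsum (t(h := n)) = gsum (t(h := 0)) + nsmul n h"
proof -
  have "t(h := n) = (\<lambda>g. (t(h := 0)) g + (if g = h then n else 0))"
    by auto
  then show ?thesis
    using gsum_add[of "t(h := 0)" "\<lambda>g. if g = h then n else 0"] gsum_single[OF assms] by simp
qed

section \<open>Convex geometry of pushes along a direction\<close>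

lemma extreme_point_convex_comb:
  fixes x :: "'a::real_vector"
  assumes "x extreme_point_of S" "a \<in> S" "b \<in> S" "0 < u" "u < 1"
    and "x = (1 - u) *\<^sub>R a + u *\<^sub>R b"
  shows "a = x \<and> b = x"
proof (cases "a = b")
  case True
  then show ?thesis using assms(6) by (simp add: algebra_simps)
next
  case False
  then have "x \<in> open_segment a b"
    using assms(4-6) by (auto simp: in_segment)
  then show ?thesis
    using assms(1-3) by (auto simp: extreme_point_of_def)
qed

lemma linear_nonneg_convex_hull:
  fixes \<phi> :: "'a::real_vector \<Rightarrow> real"
  assumes "linear \<phi>" "\<forall>x\<in>X. 0 \<le> \<phi> x" "y \<in> convex hull X"
  shows "0 \<le> \<phi> y"
proof -
  have "convex {y. 0 \<le> \<phi> y}"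
    using assms(1) by (auto simp: convex_def linear_add linear_scale)
  then have "convex hull X \<subseteq> {y. 0 \<le> \<phi> y}"
    using assms(2) by (intro hull_minimal) auto
  then show ?thesis
    using assms(3) by auto
qed

text \<open>The points with
  this property form a convex set: to push u y1 + v y2 by c, push y1 and y2 by the same
  fraction c / \<phi>(u y1 + v y2) of their own \<phi>-values.\<close>

lemma convex_hull_push_closed:
  fixes \<phi> :: "'a::real_vector \<Rightarrow> real"
  assumes lin: "linear \<phi>" and nonneg: "\<forall>x\<in>X. 0 \<le> \<phi> x"
    and base: "\<And>x c. x \<in> X \<Longrightarrow> 0 \<le> c \<Longrightarrow> c \<le> \<phi> x \<Longrightarrow> x + c *\<^sub>R W \<in> convex hull X"
    and y: "y \<in> convex hull X" and c: "0 \<le> c" "c \<le> \<phi> y"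
  shows "y + c *\<^sub>R W \<in> convex hull X"
proof -
  define D where "D = {y \<in> convex hull X. \<forall>c. 0 \<le> c \<and> c \<le> \<phi> y \<longrightarrow> y + c *\<^sub>R W \<in> convex hull X}"
  have "X \<subseteq> D"
    using base by (auto simp: D_def hull_inc)
  moreover have "convex D"
    unfolding convex_def
  proof (intro ballI allI impI)
    fix y1 y2 and u v :: real
    assume y1: "y1 \<in> D" and y2: "y2 \<in> D" and uv: "0 \<le> u" "0 \<le> v" "u + v = 1"
    let ?y = "u *\<^sub>R y1 + v *\<^sub>R y2"
    have hull: "y1 \<in> convex hull X" "y2 \<in> convex hull X"
      using y1 y2 by (auto simp: D_def)
    then have y_hull: "?y \<in> convex hull X"
      using uv by (intro convexD) auto
    have n1: "0 \<le> \<phi> y1" and n2: "0 \<le> \<phi> y2"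
      using linear_nonneg_convex_hull[OF lin nonneg] hull by auto
    have phi_y: "\<phi> ?y = u * \<phi> y1 + v * \<phi> y2"
      using lin by (simp add: linear_add linear_scale)
    have "?y + c *\<^sub>R W \<in> convex hull X" if c: "0 \<le> c" "c \<le> \<phi> ?y" for c
    proof (cases "\<phi> ?y = 0")
      case True
      then show ?thesis using c y_hull by simp
    next
      case False
      then have pos: "\<phi> ?y > 0"
        using n1 n2 uv phi_y by (metis add_nonneg_nonneg less_eq_real_def mult_nonneg_nonneg)
      define r where "r = c / \<phi> ?y"
      have r: "0 \<le> r" "r \<le> 1"
        using c pos by (auto simp: r_def)
      have p1: "y1 + (r * \<phi> y1) *\<^sub>R W \<in> convex hull X"
        using y1 r n1 unfolding D_def by (auto simp: mult_left_le_one_le)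
      have p2: "y2 + (r * \<phi> y2) *\<^sub>R W \<in> convex hull X"
        using y2 r n2 unfolding D_def by (auto simp: mult_left_le_one_le)
      have "u *\<^sub>R (y1 + (r * \<phi> y1) *\<^sub>R W) + v *\<^sub>R (y2 + (r * \<phi> y2) *\<^sub>R W)
          = ?y + (r * \<phi> ?y) *\<^sub>R W"
        by (simp add: phi_y algebra_simps)
      also have "r * \<phi> ?y = c"
        using pos by (simp add: r_def)
      finally show ?thesis
        using convexD[OF convex_convex_hull p1 p2 uv] by simp
    qed
    then show "?y \<in> D"
      using y_hull by (auto simp: D_def)
  qed
  ultimately have "convex hull X \<subseteq> D"
    by (rule hull_minimal)
  then show ?thesis
    using y c by (auto simp: D_def)
qed

text \<open>Let P be closed under pushes along W by up to \<phi> y, where \<phi> \<ge> 0 on P and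
  \<phi> W = -1, and let x0 be extreme in P.  If a point x0 - l W (l \<ge> 0) lies strictly
  between a and b in P, then pushing a and b along W in proportion to their \<phi>-values
  yields two points of P having x0 as a proper convex combination; by extremality both
  pushes land exactly on x0.\<close>

lemma extreme_point_push_back:
  fixes P :: "'a::real_vector set" and \<phi> :: "'a \<Rightarrow> real"
  assumes lin: "linear \<phi>" and dir: "\<phi> W = -1" and nonneg: "\<forall>y\<in>P. 0 \<le> \<phi> y"
    and push: "\<And>y c. y \<in> P \<Longrightarrow> 0 \<le> c \<Longrightarrow> c \<le> \<phi> y \<Longrightarrow> y + c *\<^sub>R W \<in> P"
    and ext: "x0 extreme_point_of P"
    and a: "a \<in> P" and b: "b \<in> P" and l: "0 \<le> l"
    and between: "x0 - l *\<^sub>R W \<in> open_segment a b"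
  shows "\<exists>ca cb. 0 \<le> ca \<and> 0 \<le> cb \<and> a + ca *\<^sub>R W = x0 \<and> b + cb *\<^sub>R W = x0"
proof -
  define x where "x = x0 - l *\<^sub>R W"
  have x0: "x0 \<in> P"
    using ext by (simp add: extreme_point_of_def)
  obtain v where v: "0 < v" "v < 1" "x = (1 - v) *\<^sub>R a + v *\<^sub>R b"
    using between unfolding x_def in_segment by blast
  have l_pos: "0 < l"
  proof (rule ccontr)
    assume "\<not> 0 < l"
    then have "x0 \<in> open_segment a b"
      using l between by simp
    then show False
      using ext a b by (auto simp: extreme_point_of_def)
  qed
  have phi_x: "\<phi> x = \<phi> x0 + l"
    unfolding x_def using lin dir by (simp add: linear_diff linear_scale)
  have phi_comb: "\<phi> x = (1 - v) * \<phi> a + v * \<phi> b"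
    unfolding v(3) using lin by (simp add: linear_add linear_scale)
  have phi_pos: "0 < \<phi> x"
    using phi_x nonneg x0 l_pos by fastforce
  define q where "q = l / \<phi> x"
  have q: "0 \<le> q" "q \<le> 1"
    using l_pos phi_pos phi_x nonneg x0 by (auto simp: q_def)
  define ca where "ca = q * \<phi> a"
  define cb where "cb = q * \<phi> b"
  have ca: "0 \<le> ca" "ca \<le> \<phi> a" and cb: "0 \<le> cb" "cb \<le> \<phi> b"
    using q nonneg a b by (auto simp: ca_def cb_def mult_left_le_one_le)
  have "(1 - v) * ca + v * cb = q * \<phi> x"
    by (simp add: ca_def cb_def phi_comb algebra_simps)
  also have "\<dots> = l"
    using phi_pos by (simp add: q_def)
  finally have comb: "(1 - v) * ca + v * cb = l" .
  have "(1 - v) *\<^sub>R (a + ca *\<^sub>R W) + v *\<^sub>R (b + cb *\<^sub>R W)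
      = ((1 - v) *\<^sub>R a + v *\<^sub>R b) + ((1 - v) * ca + v * cb) *\<^sub>R W"
    by (simp add: algebra_simps)
  also have "\<dots> = x0"
    using comb v(3) by (simp add: x_def algebra_simps)
  finally have "a + ca *\<^sub>R W = x0 \<and> b + cb *\<^sub>R W = x0"
    using extreme_point_convex_comb[OF ext push[OF a ca] push[OF b cb] v(1,2)] by simp
  then show ?thesis
    using ca(1) cb(1) by blast
qed

text \<open>In the setting above, if the ray from x0 in direction -W
  stays in the convex set P exactly up to x0 - m W, then [x0, x0 - m W] is a face of P:
  a point of P on a segment through the ray pushes back to x0, so it lies on the ray,
  hence on the segment.\<close>

lemma segment_face_of_push_closed:
  fixes P :: "'a::real_vector set" and \<phi> :: "'a \<Rightarrow> real"
  assumes cvx: "convex P" and lin: "linear \<phi>" and dir: "\<phi> W = -1"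
    and nonneg: "\<forall>y\<in>P. 0 \<le> \<phi> y"
    and push: "\<And>y c. y \<in> P \<Longrightarrow> 0 \<le> c \<Longrightarrow> c \<le> \<phi> y \<Longrightarrow> y + c *\<^sub>R W \<in> P"
    and ext: "x0 extreme_point_of P"
    and bound: "\<And>c. 0 \<le> c \<Longrightarrow> x0 - c *\<^sub>R W \<in> P \<Longrightarrow> c \<le> m"
    and endpoint: "x0 - m *\<^sub>R W \<in> P" and m: "0 < m"
  shows "closed_segment x0 (x0 - m *\<^sub>R W) face_of P"
proof -
  define S where "S = closed_segment x0 (x0 - m *\<^sub>R W)"
  have x0: "x0 \<in> P"
    using ext by (simp add: extreme_point_of_def)
  have on_ray: "z \<in> S" if z: "z \<in> P" "0 \<le> c" "z + c *\<^sub>R W = x0" for z c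
  proof -
    have ze: "z = x0 - c *\<^sub>R W"
      using z(3) by (simp add: algebra_simps)
    then have "c \<le> m"
      using bound z by simp
    then show ?thesis
      unfolding S_def in_segment
      by (intro exI[of _ "c / m"]) (use m z(2) in \<open>auto simp: ze algebra_simps\<close>)
  qed
  show ?thesis
    unfolding face_of_def S_def[symmetric]
  proof (intro conjI ballI impI)
    show "S \<subseteq> P"
      unfolding S_def by (rule closed_segment_subset[OF x0 endpoint cvx])
    show "convex S"
      unfolding S_def by simp
    fix a b x
    assume a: "a \<in> P" and b: "b \<in> P" and x: "x \<in> S" and xo: "x \<in> open_segment a b"
    obtain u where u: "0 \<le> u" "u \<le> 1" "x = (1 - u) *\<^sub>R x0 + u *\<^sub>R (x0 - m *\<^sub>R W)"
      using x unfolding S_def in_segment by blast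
    have "x = x0 - (u * m) *\<^sub>R W"
      using u by (simp add: algebra_simps)
    then have "\<exists>ca cb. 0 \<le> ca \<and> 0 \<le> cb \<and> a + ca *\<^sub>R W = x0 \<and> b + cb *\<^sub>R W = x0"
      using u(1) m xo
      by (intro extreme_point_push_back[where l = "u * m", OF lin dir nonneg _ ext a b]) (auto intro: push)
    then show "a \<in> S" "b \<in> S"
      using on_ray a b by auto
  qed
qed

section \<open>Merging and expanding multiplicity vectors\<close>

text \<open>A splitting of k is a nonzero multiplicity vector w on the nonzero elements other
  than k whose group sum is k; replacing a copy of k by a copy of w keeps the total sum.\<close>

definition splitting :: "'g::{ab_group_add,finite} \<Rightarrow> ('g \<Rightarrow> nat) \<Rightarrow> bool" where
  "splitting k w \<longleftrightarrow> k \<noteq> 0 \<and> w 0 = 0 \<and> w k = 0 \<and> gsum w = k \<and> w \<noteq> (\<lambda>_. 0)"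

text \<open>Expansion replaces c copies of k by c copies of w; merging is the reverse move.\<close>

definition expand :: "'g::{ab_group_add,finite} \<Rightarrow> ('g \<Rightarrow> nat) \<Rightarrow> nat \<Rightarrow> ('g \<Rightarrow> nat) \<Rightarrow> ('g \<Rightarrow> nat)" where
  "expand k w c p = (\<lambda>g. if g = k then p k - c else p g + c * w g)"

definition merge :: "'g::{ab_group_add,finite} \<Rightarrow> ('g \<Rightarrow> nat) \<Rightarrow> nat \<Rightarrow> ('g \<Rightarrow> nat) \<Rightarrow> ('g \<Rightarrow> nat)" where
  "merge k w m t = (\<lambda>g. if g = k then t k + m else t g - m * w g)"

definition expand_dir :: "'g::{ab_group_add,finite} \<Rightarrow> ('g \<Rightarrow> nat) \<Rightarrow> (real, 'g) vec" where
  "expand_dir k w = (\<chi> g. real (w g) - (if g = k then 1 else 0))"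

lemma gsum_expand:
  assumes "splitting k w" "c \<le> p k"
  shows "gsum (expand k w c p) = gsum p"
proof -
  have k: "k \<noteq> 0" "w k = 0" "gsum w = k"
    using assms(1) by (auto simp: splitting_def)
  define p' where "p' = p(k := p k - c)"
  have "p = (\<lambda>g. p' g + (if g = k then c else 0))"
    using assms(2) by (auto simp: p'_def)
  then have "gsum p = gsum p' + nsmul c k"
    using gsum_add[of p' "\<lambda>g. if g = k then c else 0"] gsum_single[OF k(1)] by simp
  moreover have "expand k w c p = (\<lambda>g. p' g + c * w g)"
    using k(2) by (auto simp: p'_def expand_def)
  then have "gsum (expand k w c p) = gsum p' + nsmul c k"
    using gsum_add[of p' "\<lambda>g. c * w g"] gsum_cmul[of c w] k(3) by simp
  ultimately show ?thesis
    by simp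
qed

lemma expand_in_Tset:
  assumes "splitting k w" "p \<in> Tset g0" "c \<le> p k"
  shows "expand k w c p \<in> Tset g0"
proof -
  obtain j where wj: "w j > 0"
    using assms(1) by (auto simp: splitting_def)
  have nonzero: "expand k w c p \<noteq> (\<lambda>_. 0)" if "p \<noteq> (\<lambda>_. 0)"
  proof (cases "c = 0")
    case True
    then have "expand k w c p = p"
      by (auto simp: expand_def)
    then show ?thesis using that by simp
  next
    case False
    have "j \<noteq> k"
      using assms(1) wj by (auto simp: splitting_def)
    then have "expand k w c p j > 0"
      using False wj by (simp add: expand_def)
    then show ?thesis by auto
  qed
  show ?thesis
    using assms nonzero gsum_expand[of k w c p, OF assms(1,3)]
    by (auto simp: Tset_def expand_def splitting_def)
qed

lemma emb_expand:
  assumes "w k = 0" "c \<le> p k"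
  shows "emb (expand k w c p) = emb p + real c *\<^sub>R expand_dir k w"
  using assms by (auto simp: vec_eq_iff emb_def expand_dir_def expand_def of_nat_diff)

lemma expand_merge:
  assumes "w k = 0" "\<forall>g. m * w g \<le> t g"
  shows "expand k w m (merge k w m t) = t"
  using assms by (auto simp: expand_def merge_def)

section \<open>The corner polyhedron is closed under expansions\<close>

lemma emb_in_corner: "p \<in> Tset g0 \<Longrightarrow> emb p \<in> corner g0"
  unfolding corner_def by (simp add: hull_inc)

lemma corner_nonneg:
  assumes "y \<in> corner g0"
  shows "0 \<le> y $ g"
  using linear_nonneg_convex_hull[OF bounded_linear.linear[OF bounded_linear_vec_nth],
      of "emb ` Tset g0"] assms by (auto simp: corner_def emb_def)

text \<open>Fractional expansions of a lattice point interpolate between two integral ones.\<close>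

lemma lattice_expand_in_corner:
  assumes split: "splitting k w" and p: "p \<in> Tset g0" and c: "0 \<le> c" "c \<le> real (p k)"
  shows "emb p + c *\<^sub>R expand_dir k w \<in> corner g0"
proof -
  have wk: "w k = 0"
    using split by (simp add: splitting_def)
  have integral: "emb p + real i *\<^sub>R expand_dir k w \<in> corner g0" if "i \<le> p k" for i
    using emb_in_corner[OF expand_in_Tset[OF split p that]] emb_expand[of w k i p, OF wk that] by simp
  define n where "n = nat \<lfloor>c\<rfloor>"
  have n: "real n \<le> c" "c < real n + 1"
    using c(1) unfolding n_def by linarith+
  have n_le: "n \<le> p k"
    using n c(2) by linarith
  show ?thesis
  proof (cases "c = real n")
    case True
    then show ?thesis using integral[OF n_le] by simp
  next
    case False
    then have Suc_le: "Suc n \<le> p k"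
      using n c(2) by linarith
    define u where "u = c - real n"
    have "(1 - u) *\<^sub>R (emb p + real n *\<^sub>R expand_dir k w)
          + u *\<^sub>R (emb p + real (Suc n) *\<^sub>R expand_dir k w) \<in> corner g0"
      unfolding corner_def
      by (rule convexD[OF convex_convex_hull integral[OF n_le, unfolded corner_def]
            integral[OF Suc_le, unfolded corner_def]]) (use n u_def in auto)
    moreover have "(1 - u) *\<^sub>R (emb p + real n *\<^sub>R expand_dir k w)
          + u *\<^sub>R (emb p + real (Suc n) *\<^sub>R expand_dir k w) = emb p + c *\<^sub>R expand_dir k w"
      unfolding u_def by (simp add: algebra_simps)
    ultimately show ?thesis
      by simp
  qed
qed

lemma corner_expand_closed:
  fixes g0 :: "'g::{ab_group_add,finite}"
  assumes split: "splitting k w" and y: "y \<in> corner g0" and c: "0 \<le> c" "c \<le> y $ k"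
  shows "y + c *\<^sub>R expand_dir k w \<in> corner g0"
proof -
  have lin: "linear (\<lambda>y::(real, 'g) vec. y $ k)"
    by (rule bounded_linear.linear[OF bounded_linear_vec_nth])
  have "\<forall>x\<in>emb ` Tset g0. 0 \<le> x $ k"
    by (auto simp: emb_def)
  moreover have "x + c *\<^sub>R expand_dir k w \<in> corner g0"
    if "x \<in> emb ` Tset g0" "0 \<le> c" "c \<le> x $ k" for x c
    using that lattice_expand_in_corner[OF split] by (auto simp: emb_def)
  ultimately show ?thesis
    using convex_hull_push_closed[OF lin] y c unfolding corner_def by blast
qed

text \<open>A merge of m copies of w contained in t stays in T(G,g0) and moves the embedding
  by -m W, since expanding it back recovers t.\<close>

lemma merge_in_Tset_and_emb:
  assumes split: "splitting k w" and tT: "t \<in> Tset g0" and m: "0 < m"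
    and fits: "\<forall>g. m * w g \<le> t g"
  shows "merge k w m t \<in> Tset g0"
    and "emb (merge k w m t) = emb t - real m *\<^sub>R expand_dir k w"
proof -
  define s where "s = merge k w m t"
  have k: "k \<noteq> 0" "w k = 0"
    using split by (auto simp: splitting_def)
  have expand_s: "expand k w m s = t"
    unfolding s_def by (rule expand_merge[OF k(2) fits])
  have m_le: "m \<le> s k"
    by (simp add: s_def merge_def)
  have "gsum s = gsum t"
    using gsum_expand[of k w m s, OF split m_le] expand_s by simp
  moreover have "s 0 = 0"
    using k tT by (simp add: s_def merge_def Tset_def)
  moreover have "s k \<noteq> 0"
    using m by (simp add: s_def merge_def)
  ultimately show "merge k w m t \<in> Tset g0"
    using tT by (auto simp: Tset_def s_def)
  show "emb (merge k w m t) = emb t - real m *\<^sub>R expand_dir k w"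
    using emb_expand[of w k m s, OF k(2) m_le] expand_s by (simp add: s_def)
qed

text \<open>In the embedding the merge moves
  t by -m W (W = expand_dir k w); the j-coordinate forbids moving further, so the
  segment from t to the merge is a face by the abstract lemma.\<close>

lemma merge_adjacent_vertex:
  fixes k :: "'g::{ab_group_add,finite}"
  assumes split: "splitting k w" and vertex: "is_vertex g0 t" and m: "0 < m"
    and fits: "\<forall>g. m * w g \<le> t g" and wj: "0 < w j" and exhausted: "t j = m * w j"
  shows "is_vertex g0 (merge k w m t) \<and> adjacent g0 t (merge k w m t)"
proof -
  define s where "s = merge k w m t"
  define W where "W = expand_dir k w"
  have k: "k \<noteq> 0" "w k = 0"
    using split by (auto simp: splitting_def)
  have tT: "t \<in> Tset g0" and ext: "emb t extreme_point_of corner g0"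
    using vertex by (auto simp: is_vertex_def)
  have sT: "s \<in> Tset g0" and emb_s: "emb s = emb t - real m *\<^sub>R W"
    using merge_in_Tset_and_emb[OF split tT m fits] by (simp_all add: s_def W_def)
  have bound: "c \<le> real m" if "0 \<le> c" "emb t - c *\<^sub>R W \<in> corner g0" for c
  proof -
    have "j \<noteq> k"
      using wj k by auto
    then have "0 \<le> real (t j) - c * real (w j)"
      using corner_nonneg[OF that(2), of j] by (simp add: W_def expand_dir_def emb_def)
    then show ?thesis
      using wj exhausted by simp
  qed
  have face: "closed_segment (emb t) (emb s) face_of corner g0"
    unfolding emb_s
  proof (rule segment_face_of_push_closed[where \<phi> = "\<lambda>y. y $ k"])
    show "linear (\<lambda>y::(real, 'g) vec. y $ k)"
      by (rule bounded_linear.linear[OF bounded_linear_vec_nth])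
  qed (use k ext bound m emb_s emb_in_corner[OF sT] corner_nonneg corner_expand_closed[OF split]
       in \<open>auto simp: corner_def W_def expand_dir_def\<close>)
  have "emb s extreme_point_of corner g0"
    using extreme_point_of_face[OF face] extreme_point_of_segment by blast
  moreover have "emb t \<noteq> emb s"
    using m by (auto simp: emb_s W_def expand_dir_def vec_eq_iff k(2) intro!: exI[of _ k])
  ultimately show ?thesis
    using sT face by (simp add: is_vertex_def adjacent_def s_def)
qed

section \<open>The operations mu as merges\<close>

text \<open>mu_{h,f} merges t(h) copies of the pair {h, f} into copies of h + f; it uses up h.\<close>

lemma mu2_adjacent_vertex:
  assumes vertex: "is_vertex g0 t" and app: "mu2_applicable t h f"
  shows "is_vertex g0 (mu2 t h f) \<and> adjacent g0 t (mu2 t h f)"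
proof -
  have h: "h \<noteq> 0" "0 < t h" and f: "f \<noteq> 0" and hf: "h \<noteq> f" "t h \<le> t f" "h + f \<noteq> 0"
    using app by (auto simp: mu2_applicable_def supp_def)
  have k: "h + f \<noteq> h" "h + f \<noteq> f"
    using h f by auto
  define w where "w = (\<lambda>g. (if g = h then 1 else 0) + (if g = f then 1 else (0::nat)))"
  have "gsum w = h + f"
    using gsum_add[of "\<lambda>g. if g = h then 1 else 0" "\<lambda>g. if g = f then 1 else (0::nat)"]
      gsum_single[OF h(1), of 1] gsum_single[OF f, of 1] by (simp add: w_def)
  then have "splitting (h + f) w"
    using h f hf k by (auto simp: splitting_def w_def fun_eq_iff)
  moreover have "mu2 t h f = merge (h + f) w (t h) t"
    using k hf by (auto simp: mu2_def merge_def Let_def w_def)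
  moreover have "\<forall>g. t h * w g \<le> t g" "t h = t h * w h" "0 < w h"
    using hf by (auto simp: w_def)
  ultimately show ?thesis
    using merge_adjacent_vertex[OF _ vertex h(2)] by metis
qed

text \<open>At a vertex t, no h with t(h) > 1 satisfies t(h) h = h: otherwise (t(h) - 1) h = 0,
  so t(h) could be replaced by 1 or by 2 t(h) - 1, and t would be their midpoint.\<close>

lemma vertex_nsmul_ne:
  fixes h :: "'g::{ab_group_add,finite}"
  assumes vertex: "is_vertex g0 t" and h: "h \<noteq> 0" and a: "1 < t h"
  shows "nsmul (t h) h \<noteq> h"
proof
  assume fixed: "nsmul (t h) h = h"
  define a where "a = t h"
  have tT: "t \<in> Tset g0" and ext: "emb t extreme_point_of corner g0"
    using vertex by (auto simp: is_vertex_def)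
  have "nsmul a h = nsmul (a - 1) h + h"
    using a nsmul_add[of "a - 1" 1 h] by (simp add: a_def)
  then have zero: "nsmul (a - 1) h = 0"
    using fixed by (simp add: a_def)
  have "2 * a - 1 = (a - 1) + a"
    using a by (simp add: a_def)
  then have "nsmul (2 * a - 1) h = nsmul (a - 1) h + nsmul a h"
    by (simp only: nsmul_add)
  then have twice: "nsmul (2 * a - 1) h = h"
    using zero fixed by (simp add: a_def)
  have gsum_t: "gsum t = gsum (t(h := 0)) + h"
    using gsum_upd[OF h, of t a] fixed by (simp add: a_def)
  have same_sum: "t(h := n) \<in> Tset g0" if "nsmul n h = h" "0 < n" for n
    using gsum_upd[OF h, of t n] gsum_t tT h that by (auto simp: Tset_def fun_eq_iff)
  have T1: "t(h := 1) \<in> Tset g0"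
    using same_sum[of 1] by simp
  have T2: "t(h := 2 * a - 1) \<in> Tset g0"
    using same_sum[OF twice] a by (simp add: a_def)
  have mid: "emb t = (1 - 1/2) *\<^sub>R emb (t(h := 1)) + (1/2) *\<^sub>R emb (t(h := 2 * a - 1))"
    using a by (auto simp: vec_eq_iff emb_def a_def of_nat_diff field_simps)
  have "emb (t(h := 1)) = emb t"
    using extreme_point_convex_comb[OF ext emb_in_corner[OF T1] emb_in_corner[OF T2] _ _ mid]
    by simp
  then have "emb (t(h := 1)) $ h = emb t $ h"
    by simp
  then show False
    using a by (simp add: emb_def)
qed

text \<open>mu_h merges one copy of the multiset "t(h) times h" into a copy of t(h) h; it uses up h.\<close>

lemma mu1_adjacent_vertex:
  assumes vertex: "is_vertex g0 t" and app: "mu1_applicable t h"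
  shows "is_vertex g0 (mu1 t h) \<and> adjacent g0 t (mu1 t h)"
proof -
  have h: "h \<noteq> 0" "1 < t h" and k0: "nsmul (t h) h \<noteq> 0"
    using app by (auto simp: mu1_applicable_def supp_def)
  define k where "k = nsmul (t h) h"
  have kh: "k \<noteq> h"
    using vertex_nsmul_ne[OF vertex h] by (simp add: k_def)
  define w where "w = (\<lambda>g. if g = h then t h else (0::nat))"
  have "gsum w = k"
    using gsum_single[OF h(1)] by (simp add: w_def k_def)
  then have "splitting k w"
    using h k0 kh by (auto simp: splitting_def w_def k_def fun_eq_iff)
  moreover have "mu1 t h = merge k w 1 t"
    using kh by (auto simp: mu1_def merge_def Let_def w_def k_def)
  moreover have "\<forall>g. 1 * w g \<le> t g" "t h = 1 * w h" "0 < w h"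
    using h by (auto simp: w_def)
  ultimately show ?thesis
    using merge_adjacent_vertex[OF _ vertex] by (metis zero_less_one)
qed

theorem theorem3:
  fixes g0 :: "'g::{ab_group_add,finite}" and t :: "'g \<Rightarrow> nat"
  assumes "is_vertex g0 t"
  shows "(\<forall>h f. mu2_applicable t h f \<longrightarrow>
            is_vertex g0 (mu2 t h f) \<and> adjacent g0 t (mu2 t h f)) \<and>
         (\<forall>h. mu1_applicable t h \<longrightarrow>
            is_vertex g0 (mu1 t h) \<and> adjacent g0 t (mu1 t h))"
  using mu2_adjacent_vertex[OF assms] mu1_adjacent_vertex[OF assms] by blast

end
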